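(* Let $\theta_1<\theta_2$, $f\in C^2([\theta_1,\theta_2])$, $\gamma>1$, and let $I\subseteq[\theta_1,\theta_2]$ be a closed interval. Suppose that, for positive constants $A$ and $\alpha$ with $\alpha<2\gamma-2$, one of the following holds: $f(s)f''(s)\le -A(s-\theta_1)^\alpha$ for all $s\in I$; or $f(s)f''(s)\le -A(\theta_2-s)^\alpha$ for all $s\in I$. Then there is a constant $C>0$ depending only on $A,\alpha,\theta_1,\theta_2,\gamma$ such that $\int_I|f(s)|^{-1/\gamma}\,ds\le C$. *)

theory Defs
  imports "HOL-Analysis.Analysis"
begin

definition C2_on_with :: "real \<Rightarrow> real \<Rightarrow> (real \<Rightarrow> real) \<Rightarrow> (real \<Rightarrow> real) \<Rightarrow> (real \<Rightarrow> real) \<Rightarrow> bool" where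
  "C2_on_with t1 t2 f f' f'' \<longleftrightarrow>
     (\<forall>x\<in>{t1..t2}. (f has_real_derivative f' x) (at x within {t1..t2})) \<and>
     (\<forall>x\<in>{t1..t2}. (f' has_real_derivative f'' x) (at x within {t1..t2})) \<and>
     continuous_on {t1..t2} f''"

definition neg_pow_abs :: "real \<Rightarrow> (real \<Rightarrow> real) \<Rightarrow> real \<Rightarrow> ennreal" where
  "neg_pow_abs g f s = (if f s = 0 then \<infinity> else ennreal (\<bar>f s\<bar> powr (- 1 / g)))"

end

theory Submission
  imports Defs
begin

(* Since f f'' < 0 on the open interval, f has no zero there; replacing f by -f we may assume
   that f is positive and concave.  On the half of the interval where the weight is at least
   ((b - a) / 2) powr alpha we get f'' <= - B / M, with B = A ((b - a) / 2) powr alpha and M the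
   maximum of f, and comparing f with a parabola at the midpoint of that half gives
   M^2 >= B (b - a)^2 / 32.  Concavity puts f above the tent of height M over [a, b], so
   the integral of f powr (-1/gamma) is at most 2 gamma / (gamma - 1) M powr (-1/gamma) (b - a).
   Together this bounds the integral by a constant times (b - a) powr (1 - (alpha + 2) / (2 gamma)),
   and alpha < 2 gamma - 2 makes this exponent positive, so b - a <= theta2 - theta1 gives a
   bound independent of f, a and b. *)

lemma concave_on_Icc_if_concave_on_Ioo:
  fixes f :: "real \<Rightarrow> real"
  assumes "a < b" and cont: "continuous_on {a..b} f" and concave: "concave_on {a<..<b} f"
  shows "concave_on {a..b} f"
proof (rule concave_on_linorderI)
  fix u x y :: real
  assume u: "0 < u" "u < 1" and xy: "x \<in> {a..b}" "y \<in> {a..b}"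
  \<comment> \<open>The concavity inequality is a closed condition on the pair (x, y), so it passes from
    the open square to its closure.\<close>
  define gap where "gap = (\<lambda>(x, y). f ((1 - u) * x + u * y) - (1 - u) * f x - u * f y)"
  have closure: "closure ({a<..<b} \<times> {a<..<b}) = {a..b} \<times> {a..b}"
    using \<open>a < b\<close> by (simp add: closure_Times)
  have mix: "(1 - u) * fst p + u * snd p \<in> {a..b}" if "p \<in> {a..b} \<times> {a..b}" for p
    using convexD[of "{a..b}" "fst p" "snd p" "1 - u" u] that u by auto
  have "continuous_on (closure ({a<..<b} \<times> {a<..<b})) gap"
    unfolding closure gap_def case_prod_beta using mix
    by (intro continuous_intros continuous_on_compose2[OF cont]) auto
  moreover have "gap p \<ge> 0" if "p \<in> {a<..<b} \<times> {a<..<b}" for p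
    using concave_onD[OF concave, of u "fst p" "snd p"] that u
    by (auto simp: gap_def case_prod_beta)
  ultimately have "gap (x, y) \<ge> 0"
    using continuous_ge_on_closure[of _ gap] xy closure by blast
  then show "(1 - u) * f x + u * f y \<le> f ((1 - u) *\<^sub>R x + u *\<^sub>R y)"
    by (simp add: gap_def)
qed simp

lemma concave_on_Icc_if_deriv2_nonpos:
  fixes f f' f'' :: "real \<Rightarrow> real"
  assumes "a < b" and "continuous_on {a..b} f"
    and "\<And>t. t \<in> {a<..<b} \<Longrightarrow> (f has_real_derivative f' t) (at t)"
    and "\<And>t. t \<in> {a<..<b} \<Longrightarrow> (f' has_real_derivative f'' t) (at t)"
    and "\<And>t. t \<in> {a<..<b} \<Longrightarrow> f'' t \<le> 0"
  shows "concave_on {a..b} f"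
  using assms by (intro concave_on_Icc_if_concave_on_Ioo f''_le0_imp_concave) auto

lemma midpoint_ge_if_deriv2_le:
  fixes h h' h'' :: "real \<Rightarrow> real"
  assumes "c < d" and cont: "continuous_on {c..d} h"
    and h': "\<And>t. t \<in> {c<..<d} \<Longrightarrow> (h has_real_derivative h' t) (at t)"
    and h'': "\<And>t. t \<in> {c<..<d} \<Longrightarrow> (h' has_real_derivative h'' t) (at t)"
    and curv: "\<And>t. t \<in> {c<..<d} \<Longrightarrow> h'' t \<le> - K"
  shows "(h c + h d) / 2 + K * (d - c)^2 / 8 \<le> h ((c + d) / 2)"
proof -
  define q where "q t = h t + K / 2 * (t - c) * (t - d)" for t
  have "concave_on {c..d} q"
  proof (rule concave_on_Icc_if_deriv2_nonpos[OF \<open>c < d\<close>])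
    show "continuous_on {c..d} q"
      unfolding q_def by (intro continuous_intros cont)
    show "(q has_real_derivative h' t + K / 2 * ((t - c) + (t - d))) (at t)" if "t \<in> {c<..<d}" for t
      unfolding q_def using h'[OF that] by (auto intro!: derivative_eq_intros simp: field_simps)
    show "((\<lambda>t. h' t + K / 2 * ((t - c) + (t - d))) has_real_derivative h'' t + K) (at t)"
      if "t \<in> {c<..<d}" for t
      using h''[OF that] by (auto intro!: derivative_eq_intros simp: field_simps)
  qed (use curv in force)
  then have "(1 - 1/2) * q c + 1/2 * q d \<le> q ((1 - 1/2) *\<^sub>R c + (1/2) *\<^sub>R d)"
    using \<open>c < d\<close> by (intro concave_onD_Icc) auto
  then show ?thesis
    by (simp add: q_def field_simps power2_eq_square)
qed

lemma sq_bound_ge_if_mult_deriv2_le: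
  fixes f f' f'' :: "real \<Rightarrow> real"
  assumes "c < d" and cont: "continuous_on {c..d} f"
    and f': "\<And>t. t \<in> {c<..<d} \<Longrightarrow> (f has_real_derivative f' t) (at t)"
    and f'': "\<And>t. t \<in> {c<..<d} \<Longrightarrow> (f' has_real_derivative f'' t) (at t)"
    and "0 \<le> f c" "0 \<le> f d"
    and bounds: "\<And>t. t \<in> {c<..<d} \<Longrightarrow> 0 < f t \<and> f t \<le> M"
    and curv: "\<And>t. t \<in> {c<..<d} \<Longrightarrow> f t * f'' t \<le> - B" and "0 \<le> B"
  shows "B * (d - c)^2 / 8 \<le> M^2"
proof -
  have mid: "(c + d) / 2 \<in> {c<..<d}"
    using \<open>c < d\<close> by auto
  then have "0 < M"
    using bounds by fastforce
  have "f'' t \<le> - (B / M)" if "t \<in> {c<..<d}" for t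
  proof -
    have ft: "0 < f t" "f t \<le> M"
      using bounds[OF that] by auto
    then have "f'' t \<le> - B / f t"
      using curv[OF that] by (simp add: field_simps mult.commute)
    moreover have "B / M \<le> B / f t"
      using ft \<open>0 \<le> B\<close> by (intro divide_left_mono) auto
    ultimately show ?thesis by linarith
  qed
  then have "(f c + f d) / 2 + B / M * (d - c)^2 / 8 \<le> f ((c + d) / 2)"
    using midpoint_ge_if_deriv2_le[OF \<open>c < d\<close> cont f' f'', of "B / M"] by simp
  also have "\<dots> \<le> M"
    using bounds[OF mid] by simp
  finally have "B / M * (d - c)^2 / 8 \<le> M"
    using \<open>0 \<le> f c\<close> \<open>0 \<le> f d\<close> by (smt (verit) divide_nonneg_nonneg)
  then show ?thesis
    using \<open>0 < M\<close> by (simp add: field_simps power2_eq_square)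
qed

lemma concave_on_Icc_chord_le:
  fixes f :: "real \<Rightarrow> real"
  assumes "concave_on {x..y} f" "t \<in> {x..y}"
  shows "f x * (y - t) + f y * (t - x) \<le> f t * (y - x)"
proof (cases "x = y")
  case False
  then have "x < y"
    using assms(2) by simp
  have "(f y - f x) / (y - x) * (t - x) + f x \<le> f t"
    using concave_onD_Icc'[OF assms] by simp
  then show ?thesis
    using \<open>x < y\<close> by (simp add: field_simps)
qed (use assms(2) in simp)

lemma concave_on_ge_tent:
  fixes f :: "real \<Rightarrow> real"
  assumes concave: "concave_on {a..b} f" and "0 \<le> f a" "0 \<le> f b"
    and m: "m \<in> {a..b}" "0 \<le> f m" and t: "t \<in> {a..b}"
  shows "f m * min (t - a) (b - t) / (b - a) \<le> f t"
proof -
  have "0 \<le> f t"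
    using concave_on_ge_min[OF concave t] \<open>0 \<le> f a\<close> \<open>0 \<le> f b\<close> by linarith
  have "f m * min (t - a) (b - t) \<le> f t * (b - a)"
  proof (cases "t \<le> m")
    case True
    have "concave_on {a..m} f"
      using concave m unfolding concave_on_def by (auto intro: convex_on_subset)
    then have "f a * (m - t) + f m * (t - a) \<le> f t * (m - a)"
      using t True by (intro concave_on_Icc_chord_le) auto
    moreover have "f m * min (t - a) (b - t) \<le> f m * (t - a)"
      using m by (intro mult_left_mono) auto
    moreover have "f t * (m - a) \<le> f t * (b - a)"
      using m \<open>0 \<le> f t\<close> by (intro mult_left_mono) auto
    moreover have "0 \<le> f a * (m - t)"
      using \<open>0 \<le> f a\<close> True by simp
    ultimately show ?thesis by linarith
  next
    case False
    have "concave_on {m..b} f"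
      using concave m unfolding concave_on_def by (auto intro: convex_on_subset)
    then have "f m * (b - t) + f b * (t - m) \<le> f t * (b - m)"
      using t False by (intro concave_on_Icc_chord_le) auto
    moreover have "f m * min (t - a) (b - t) \<le> f m * (b - t)"
      using m by (intro mult_left_mono) auto
    moreover have "f t * (b - m) \<le> f t * (b - a)"
      using m \<open>0 \<le> f t\<close> by (intro mult_left_mono) auto
    moreover have "0 \<le> f b * (t - m)"
      using \<open>0 \<le> f b\<close> False by simp
    ultimately show ?thesis by linarith
  qed
  then show ?thesis
    using t \<open>0 \<le> f t\<close> by (cases "a = b") (auto simp: divide_le_eq)
qed

lemma has_integral_powr_endpoints:
  fixes a b p :: real
  assumes "a < b" and p: "0 < p" "p < 1"
  shows "((\<lambda>t. (t - a) powr - p + (b - t) powr - p) has_integral 2 * (b - a) powr (1 - p) / (1 - p)) {a..b}"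
proof -
  define F where "F t = ((t - a) powr (1 - p) - (b - t) powr (1 - p)) / (1 - p)" for t
  have "continuous_on {a..b} F"
    unfolding F_def using p by (intro continuous_intros continuous_on_powr') auto
  moreover have "(F has_real_derivative (t - a) powr - p + (b - t) powr - p) (at t)"
    if "t \<in> {a<..<b}" for t
    unfolding F_def using that p
    by (auto intro!: derivative_eq_intros) (simp add: add_divide_distrib)
  ultimately have "((\<lambda>t. (t - a) powr - p + (b - t) powr - p) has_integral F b - F a) {a..b}"
    using \<open>a < b\<close> by (intro fundamental_theorem_of_calculus_interior)
      (auto simp: has_real_derivative_iff_has_vector_derivative)
  then show ?thesis
    by (simp add: F_def field_simps)
qed

lemma concave_on_powr_le_tent:
  fixes f :: "real \<Rightarrow> real"
  assumes concave: "concave_on {a..b} f" and "0 \<le> f a" "0 \<le> f b"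
    and m: "m \<in> {a..b}" "0 < f m" and s: "s \<in> {a<..<b}" and "0 \<le> p"
  shows "0 < f s"
    and "f s powr - p \<le> (f m / (b - a)) powr - p * ((s - a) powr - p + (b - s) powr - p)"
proof -
  have tent_pos: "0 < f m * min (s - a) (b - s) / (b - a)"
    using s m by simp
  have tent_le: "f m * min (s - a) (b - s) / (b - a) \<le> f s"
    by (rule concave_on_ge_tent[OF concave]) (use \<open>0 \<le> f a\<close> \<open>0 \<le> f b\<close> s m in auto)
  show "0 < f s"
    using tent_pos tent_le by linarith
  have "f s powr - p \<le> (f m * min (s - a) (b - s) / (b - a)) powr - p"
    using tent_pos tent_le \<open>0 \<le> p\<close> by (intro powr_mono2') auto
  also have "\<dots> = (f m / (b - a)) powr - p * min (s - a) (b - s) powr - p"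
    using s m by (subst powr_mult[symmetric]) auto
  also have "\<dots> \<le> (f m / (b - a)) powr - p * ((s - a) powr - p + (b - s) powr - p)"
    by (intro mult_left_mono) (auto simp: min_def)
  finally show "f s powr - p \<le> (f m / (b - a)) powr - p * ((s - a) powr - p + (b - s) powr - p)" .
qed

lemma nn_integral_neg_pow_abs_le_if_concave:
  fixes f :: "real \<Rightarrow> real"
  assumes "a < b" and concave: "concave_on {a..b} f" and "0 \<le> f a" "0 \<le> f b"
    and m: "m \<in> {a..b}" "0 < f m" and "1 < g"
  shows "(\<integral>\<^sup>+ s\<in>{a..b}. neg_pow_abs g f s \<partial>lborel)
           \<le> ennreal (2 * g / (g - 1) * f m powr (- 1 / g) * (b - a))"
proof -
  define p where "p = 1 / g"
  have p: "0 < p" "p < 1"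
    using \<open>1 < g\<close> by (auto simp: p_def)
  define K where "K = (f m / (b - a)) powr - p"
  define tent where "tent s = (s - a) powr - p + (b - s) powr - p" for s
  have "AE s in lborel. s \<noteq> a \<and> s \<noteq> b"
    by (intro AE_conjI AE_lborel_singleton)
  then have "AE s in lborel. neg_pow_abs g f s * indicator {a..b} s \<le> ennreal (K * tent s) * indicator {a..b} s"
  proof eventually_elim
    case (elim s)
    show ?case
    proof (cases "s \<in> {a<..<b}")
      case True
      show ?thesis
        using concave_on_powr_le_tent[OF concave \<open>0 \<le> f a\<close> \<open>0 \<le> f b\<close> m True, of p] p True
        by (simp add: neg_pow_abs_def p_def K_def tent_def ennreal_leI)
    qed (use elim in \<open>auto split: split_indicator\<close>)
  qed
  then have "(\<integral>\<^sup>+ s\<in>{a..b}. neg_pow_abs g f s \<partial>lborel)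
      \<le> (\<integral>\<^sup>+ s\<in>{a..b}. ennreal (K * tent s) \<partial>lborel)"
    by (rule nn_integral_mono_AE)
  also have "\<dots> = ennreal (K * (2 * (b - a) powr (1 - p) / (1 - p)))"
    unfolding tent_def using has_integral_powr_endpoints[OF \<open>a < b\<close> p]
    by (intro nn_integral_has_integral_lebesgue' has_integral_mult_right) (auto simp: K_def)
  also have "K * (2 * (b - a) powr (1 - p) / (1 - p))
      = 2 / (1 - p) * f m powr - p * ((b - a) powr p * (b - a) powr (1 - p))"
    using \<open>a < b\<close> m by (simp add: K_def powr_divide powr_minus field_simps)
  also have "\<dots> = 2 * g / (g - 1) * f m powr (- 1 / g) * (b - a)"
    using \<open>a < b\<close> \<open>1 < g\<close> by (simp add: p_def powr_add[symmetric] field_simps)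
  finally show ?thesis .
qed

lemma nn_integral_neg_pow_abs_le_if_pos:
  fixes f f' f'' :: "real \<Rightarrow> real"
  assumes "a \<le> c" "c < d" "d \<le> b" and cont: "continuous_on {a..b} f"
    and f': "\<And>t. t \<in> {a<..<b} \<Longrightarrow> (f has_real_derivative f' t) (at t)"
    and f'': "\<And>t. t \<in> {a<..<b} \<Longrightarrow> (f' has_real_derivative f'' t) (at t)"
    and pos: "\<And>t. t \<in> {a<..<b} \<Longrightarrow> 0 < f t"
    and concave: "\<And>t. t \<in> {a<..<b} \<Longrightarrow> f'' t \<le> 0"
    and curv: "\<And>t. t \<in> {c<..<d} \<Longrightarrow> f t * f'' t \<le> - B" and "0 < B" "1 < g"
  shows "(\<integral>\<^sup>+ s\<in>{a..b}. neg_pow_abs g f s \<partial>lborel)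
           \<le> ennreal (2 * g / (g - 1) * (B * (d - c)^2 / 8) powr (- 1 / (2 * g)) * (b - a))"
proof -
  have "a < b"
    using assms(1-3) by simp
  have nonneg: "0 \<le> f t" if "t \<in> {a..b}" for t
    using continuous_ge_on_closure[of "{a<..<b}" f t 0] cont pos that \<open>a < b\<close> by fastforce
  obtain m where m: "m \<in> {a..b}" "\<And>t. t \<in> {a..b} \<Longrightarrow> f t \<le> f m"
    using continuous_attains_sup[OF compact_Icc _ cont] \<open>a < b\<close> by auto
  have "0 < f m"
    using pos[of "(a + b) / 2"] m(2)[of "(a + b) / 2"] \<open>a < b\<close> by simp
  have "B * (d - c)^2 / 8 \<le> (f m)^2"
  proof (rule sq_bound_ge_if_mult_deriv2_le[OF \<open>c < d\<close>])
    show "continuous_on {c..d} f"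
      using cont assms(1-3) by (auto elim: continuous_on_subset)
  qed (use assms m nonneg in \<open>auto intro!: f' f'' pos\<close>)
  then have "f m powr (- 1 / g) \<le> (B * (d - c)^2 / 8) powr (- 1 / (2 * g))"
    using \<open>0 < f m\<close> \<open>0 < B\<close> \<open>c < d\<close> \<open>1 < g\<close>
      powr_mono2'[of "- 1 / (2 * g)" "B * (d - c)^2 / 8" "(f m)^2"]
    by (simp add: powr_powr flip: powr_numeral)
  moreover have "(\<integral>\<^sup>+ s\<in>{a..b}. neg_pow_abs g f s \<partial>lborel)
      \<le> ennreal (2 * g / (g - 1) * f m powr (- 1 / g) * (b - a))"
    using concave_on_Icc_if_deriv2_nonpos[OF \<open>a < b\<close> cont f' f'' concave]
      nonneg m \<open>0 < f m\<close> \<open>a < b\<close> \<open>1 < g\<close>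
    by (intro nn_integral_neg_pow_abs_le_if_concave) auto
  ultimately show ?thesis
    using \<open>a < b\<close> \<open>1 < g\<close> by (elim order_trans) (intro ennreal_leI mult_right_mono mult_left_mono; simp)
qed

lemma pos_or_neg_if_nonzero:
  fixes f :: "real \<Rightarrow> real"
  assumes "continuous_on S f" "connected S" and nonzero: "\<And>t. t \<in> S \<Longrightarrow> f t \<noteq> 0"
  shows "(\<forall>t\<in>S. 0 < f t) \<or> (\<forall>t\<in>S. f t < 0)"
proof (rule ccontr)
  assume "\<not> ?thesis"
  then obtain s t where st: "s \<in> S" "t \<in> S" "f s \<le> 0" "0 \<le> f t"
    by (auto simp: not_less)
  have "connected (f ` S)"
    using assms(1,2) by (rule connected_continuous_image)
  then have "0 \<in> f ` S"
    using st unfolding connected_iff_interval by blast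
  with nonzero show False by auto
qed

lemma nn_integral_neg_pow_abs_le_if_mult_deriv2_neg:
  fixes f f' f'' :: "real \<Rightarrow> real"
  assumes "a \<le> c" "c < d" "d \<le> b" and cont: "continuous_on {a..b} f"
    and f': "\<And>t. t \<in> {a<..<b} \<Longrightarrow> (f has_real_derivative f' t) (at t)"
    and f'': "\<And>t. t \<in> {a<..<b} \<Longrightarrow> (f' has_real_derivative f'' t) (at t)"
    and neg: "\<And>t. t \<in> {a<..<b} \<Longrightarrow> f t * f'' t < 0"
    and curv: "\<And>t. t \<in> {c<..<d} \<Longrightarrow> f t * f'' t \<le> - B" and "0 < B" "1 < g"
  shows "(\<integral>\<^sup>+ s\<in>{a..b}. neg_pow_abs g f s \<partial>lborel)
           \<le> ennreal (2 * g / (g - 1) * (B * (d - c)^2 / 8) powr (- 1 / (2 * g)) * (b - a))"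
proof -
  have "(\<forall>t\<in>{a<..<b}. 0 < f t) \<or> (\<forall>t\<in>{a<..<b}. f t < 0)"
    using neg by (intro pos_or_neg_if_nonzero continuous_on_subset[OF cont]) fastforce+
  then show ?thesis
  proof
    assume pos: "\<forall>t\<in>{a<..<b}. 0 < f t"
    have "f'' t \<le> 0" if "t \<in> {a<..<b}" for t
      using neg[OF that] pos that by (fastforce simp: mult_less_0_iff)
    then show ?thesis
      using pos \<open>0 < B\<close> \<open>1 < g\<close>
      by (intro nn_integral_neg_pow_abs_le_if_pos[OF assms(1-3) cont f' f'' _ _ curv]) auto
  next
    assume negf: "\<forall>t\<in>{a<..<b}. f t < 0"
    have convex: "0 \<le> f'' t" if "t \<in> {a<..<b}" for t
      using neg[OF that] negf that by (fastforce simp: mult_less_0_iff)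
    have "(\<integral>\<^sup>+ s\<in>{a..b}. neg_pow_abs g (\<lambda>t. - f t) s \<partial>lborel)
        \<le> ennreal (2 * g / (g - 1) * (B * (d - c)^2 / 8) powr (- 1 / (2 * g)) * (b - a))"
    proof (rule nn_integral_neg_pow_abs_le_if_pos[where f' = "\<lambda>t. - f' t" and f'' = "\<lambda>t. - f'' t", OF assms(1-3)])
      show "continuous_on {a..b} (\<lambda>t. - f t)"
        using cont by (rule continuous_on_minus)
      show "((\<lambda>t. - f t) has_real_derivative - f' t) (at t)" if "t \<in> {a<..<b}" for t
        using f'[OF that] by (rule DERIV_minus)
      show "((\<lambda>t. - f' t) has_real_derivative - f'' t) (at t)" if "t \<in> {a<..<b}" for t
        using f''[OF that] by (rule DERIV_minus)
    qed (use negf convex curv \<open>0 < B\<close> \<open>1 < g\<close> in auto)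
    moreover have "neg_pow_abs g (\<lambda>t. - f t) = neg_pow_abs g f"
      by (simp add: neg_pow_abs_def fun_eq_iff)
    ultimately show ?thesis by simp
  qed
qed

lemma half_interval_le_if_le_weight:
  fixes \<phi> :: "real \<Rightarrow> real"
  assumes "\<theta>1 \<le> a" "a < b" "b \<le> \<theta>2" "0 < A" "0 \<le> \<alpha>"
    and "(\<forall>s\<in>{a..b}. \<phi> s \<le> - A * (s - \<theta>1) powr \<alpha>) \<or>
         (\<forall>s\<in>{a..b}. \<phi> s \<le> - A * (\<theta>2 - s) powr \<alpha>)"
  obtains c d where "a \<le> c" "d \<le> b" "d - c = (b - a) / 2"
    and "\<And>t. t \<in> {a<..<b} \<Longrightarrow> \<phi> t < 0"
    and "\<And>t. t \<in> {c<..<d} \<Longrightarrow> \<phi> t \<le> - (A * ((b - a) / 2) powr \<alpha>)"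
proof -
  obtain w c where \<phi>: "\<And>s. s \<in> {a..b} \<Longrightarrow> \<phi> s \<le> - (A * w s)"
    and pos: "\<And>t. t \<in> {a<..<b} \<Longrightarrow> 0 < w t"
    and c: "a \<le> c" "c + (b - a) / 2 \<le> b"
    and low: "\<And>t. t \<in> {c<..<c + (b - a) / 2} \<Longrightarrow> ((b - a) / 2) powr \<alpha> \<le> w t"
    using assms(6)
  proof (elim disjE)
    assume "\<forall>s\<in>{a..b}. \<phi> s \<le> - A * (s - \<theta>1) powr \<alpha>"
    then show thesis
      using assms(1-5) by (intro that[of "\<lambda>s. (s - \<theta>1) powr \<alpha>" "(a + b) / 2"])
        (auto intro!: powr_mono2 simp: field_simps)
  next
    assume "\<forall>s\<in>{a..b}. \<phi> s \<le> - A * (\<theta>2 - s) powr \<alpha>"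
    then show thesis
      using assms(1-5) by (intro that[of "\<lambda>s. (\<theta>2 - s) powr \<alpha>" a])
        (auto intro!: powr_mono2 simp: field_simps)
  qed
  show thesis
  proof (rule that[of c "c + (b - a) / 2"])
    show "\<phi> t < 0" if "t \<in> {a<..<b}" for t
    proof -
      have "0 < A * w t"
        using pos[OF that] assms(4) by simp
      moreover have "\<phi> t \<le> - (A * w t)"
        using \<phi> that by auto
      ultimately show ?thesis by linarith
    qed
    show "\<phi> t \<le> - (A * ((b - a) / 2) powr \<alpha>)" if "t \<in> {c<..<c + (b - a) / 2}" for t
    proof -
      have "A * ((b - a) / 2) powr \<alpha> \<le> A * w t"
        using low[OF that] assms(4) by simp
      moreover have "\<phi> t \<le> - (A * w t)"
        using \<phi> that c by auto
      ultimately show ?thesis by linarith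
    qed
  qed (use c in auto)
qed

lemma powr_scaling_le:
  fixes A L T \<alpha> g :: real
  assumes "0 < A" "0 < L" "L \<le> T" "0 < g" "\<alpha> + 2 \<le> 2 * g"
  shows "(A * L powr \<alpha> * L^2 / 8) powr (- 1 / (2 * g)) * L
           \<le> (A / 8) powr (- 1 / (2 * g)) * T powr (1 - (\<alpha> + 2) / (2 * g))"
proof -
  define q where "q = - 1 / (2 * g)"
  have "A * L powr \<alpha> * L^2 / 8 = A / 8 * L powr (\<alpha> + 2)"
    using \<open>0 < L\<close> by (simp add: powr_add flip: powr_numeral)
  then have "(A * L powr \<alpha> * L^2 / 8) powr q * L = (A / 8 * L powr (\<alpha> + 2)) powr q * L"
    by (rule arg_cong)
  also have "\<dots> = (A / 8) powr q * (L * L powr ((\<alpha> + 2) * q))"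
    using assms(1,2) by (subst powr_mult) (simp_all add: powr_powr)
  also have "L * L powr ((\<alpha> + 2) * q) = L powr (1 - (\<alpha> + 2) / (2 * g))"
    using assms(2,4) by (simp add: powr_mult_base q_def field_simps)
  also have "(A / 8) powr q * \<dots> \<le> (A / 8) powr q * T powr (1 - (\<alpha> + 2) / (2 * g))"
    using assms by (intro mult_left_mono powr_mono2) auto
  finally show ?thesis
    unfolding q_def .
qed

lemma C2_on_with_subinterval:
  assumes "C2_on_with \<theta>1 \<theta>2 f f' f''" "\<theta>1 \<le> a" "b \<le> \<theta>2"
  shows "continuous_on {a..b} f"
    and "\<And>t. t \<in> {a<..<b} \<Longrightarrow> (f has_real_derivative f' t) (at t)"
    and "\<And>t. t \<in> {a<..<b} \<Longrightarrow> (f' has_real_derivative f'' t) (at t)"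
proof -
  have at: "at t within {\<theta>1..\<theta>2} = at t" if "t \<in> {a<..<b}" for t
    using that assms(2,3) by (intro at_within_Icc_at) auto
  show "continuous_on {a..b} f"
    using assms DERIV_continuous_on[of "{\<theta>1..\<theta>2}" f f']
    by (auto simp: C2_on_with_def elim: continuous_on_subset)
  show "(f has_real_derivative f' t) (at t)" "(f' has_real_derivative f'' t) (at t)"
    if "t \<in> {a<..<b}" for t
    using assms that by (auto simp: C2_on_with_def simp flip: at[OF that])
qed

lemma nn_integral_neg_pow_abs_le_if_mult_deriv2_le_weight:
  fixes f f' f'' :: "real \<Rightarrow> real"
  assumes "\<theta>1 \<le> a" "b \<le> \<theta>2" "1 < \<gamma>" "0 < A" "0 \<le> \<alpha>" "\<alpha> + 2 \<le> 2 * \<gamma>"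
    and cont: "continuous_on {a..b} f"
    and f': "\<And>t. t \<in> {a<..<b} \<Longrightarrow> (f has_real_derivative f' t) (at t)"
    and f'': "\<And>t. t \<in> {a<..<b} \<Longrightarrow> (f' has_real_derivative f'' t) (at t)"
    and weight: "(\<forall>s\<in>{a..b}. f s * f'' s \<le> - A * (s - \<theta>1) powr \<alpha>) \<or>
                 (\<forall>s\<in>{a..b}. f s * f'' s \<le> - A * (\<theta>2 - s) powr \<alpha>)"
  shows "(\<integral>\<^sup>+ s\<in>{a..b}. neg_pow_abs \<gamma> f s \<partial>lborel)
           \<le> ennreal (4 * \<gamma> / (\<gamma> - 1) * (A / 8) powr (- 1 / (2 * \<gamma>)) *
                      (\<theta>2 - \<theta>1) powr (1 - (\<alpha> + 2) / (2 * \<gamma>)))"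
proof (cases "a < b")
  case False
  then have "finite {a..b}"
    by (cases "a = b") auto
  then have "{a..b} \<in> null_sets lborel"
    by (rule finite_imp_null_set_lborel)
  then show ?thesis
    by (simp add: nn_integral_null_set)
next
  case True
  define L where "L = (b - a) / 2"
  define X where "X = (A * L powr \<alpha> * L^2 / 8) powr (- 1 / (2 * \<gamma>))"
  obtain c d where "a \<le> c" "d \<le> b" "d - c = L"
    and neg: "\<And>t. t \<in> {a<..<b} \<Longrightarrow> f t * f'' t < 0"
    and curv: "\<And>t. t \<in> {c<..<d} \<Longrightarrow> f t * f'' t \<le> - (A * L powr \<alpha>)"
    using half_interval_le_if_le_weight[OF assms(1) True assms(2,4,5) weight, folded L_def] by blast
  have "(\<integral>\<^sup>+ s\<in>{a..b}. neg_pow_abs \<gamma> f s \<partial>lborel)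
      \<le> ennreal (2 * \<gamma> / (\<gamma> - 1) * (A * L powr \<alpha> * (d - c)^2 / 8) powr (- 1 / (2 * \<gamma>)) * (b - a))"
    using True assms \<open>d - c = L\<close>
    by (intro nn_integral_neg_pow_abs_le_if_mult_deriv2_neg[OF \<open>a \<le> c\<close> _ \<open>d \<le> b\<close> cont f' f'' neg curv])
      (auto simp: L_def)
  also have "\<dots> = ennreal (2 * \<gamma> / (\<gamma> - 1) * X * (b - a))"
    using \<open>d - c = L\<close> by (simp add: X_def)
  also have "\<dots> \<le> ennreal (4 * \<gamma> / (\<gamma> - 1) * (A / 8) powr (- 1 / (2 * \<gamma>)) *
      (\<theta>2 - \<theta>1) powr (1 - (\<alpha> + 2) / (2 * \<gamma>)))"
  proof (intro ennreal_leI)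
    have "2 * \<gamma> / (\<gamma> - 1) * X * (b - a) = 4 * \<gamma> / (\<gamma> - 1) * (X * L)"
      using assms(3) by (simp add: L_def field_simps)
    also have "\<dots> \<le> 4 * \<gamma> / (\<gamma> - 1) *
        ((A / 8) powr (- 1 / (2 * \<gamma>)) * (\<theta>2 - \<theta>1) powr (1 - (\<alpha> + 2) / (2 * \<gamma>)))"
      unfolding X_def using True assms by (intro mult_left_mono powr_scaling_le) (auto simp: L_def)
    finally show "2 * \<gamma> / (\<gamma> - 1) * X * (b - a) \<le> 4 * \<gamma> / (\<gamma> - 1) * (A / 8) powr (- 1 / (2 * \<gamma>)) *
        (\<theta>2 - \<theta>1) powr (1 - (\<alpha> + 2) / (2 * \<gamma>))"
      by (simp only: mult.assoc)
  qed
  finally show ?thesis .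
qed

theorem lemma3p7:
  fixes \<theta>1 \<theta>2 \<gamma> A \<alpha> :: real
  assumes "\<theta>1 < \<theta>2" and "\<gamma> > 1" and "A > 0" and "\<alpha> > 0" and "\<alpha> < 2 * \<gamma> - 2"
  shows "\<exists>C>0. \<forall>f f' f'' a b.
           C2_on_with \<theta>1 \<theta>2 f f' f'' \<and> \<theta>1 \<le> a \<and> b \<le> \<theta>2 \<and>
           ((\<forall>s\<in>{a..b}. f s * f'' s \<le> - A * (s - \<theta>1) powr \<alpha>) \<or>
            (\<forall>s\<in>{a..b}. f s * f'' s \<le> - A * (\<theta>2 - s) powr \<alpha>))
           \<longrightarrow> (\<integral>\<^sup>+ s\<in>{a..b}. neg_pow_abs \<gamma> f s \<partial>lborel) \<le> ennreal C"
proof -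
  define C where "C = 4 * \<gamma> / (\<gamma> - 1) * (A / 8) powr (- 1 / (2 * \<gamma>)) *
    (\<theta>2 - \<theta>1) powr (1 - (\<alpha> + 2) / (2 * \<gamma>))"
  have "0 < C"
    using assms by (simp add: C_def)
  moreover have "(\<integral>\<^sup>+ s\<in>{a..b}. neg_pow_abs \<gamma> f s \<partial>lborel) \<le> ennreal C"
    if "C2_on_with \<theta>1 \<theta>2 f f' f''" "\<theta>1 \<le> a" "b \<le> \<theta>2"
      and "(\<forall>s\<in>{a..b}. f s * f'' s \<le> - A * (s - \<theta>1) powr \<alpha>) \<or>
           (\<forall>s\<in>{a..b}. f s * f'' s \<le> - A * (\<theta>2 - s) powr \<alpha>)"
    for f f' f'' :: "real \<Rightarrow> real" and a b
    unfolding C_def using assms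
    by (intro nn_integral_neg_pow_abs_le_if_mult_deriv2_le_weight[OF that(2,3) _ _ _ _
          C2_on_with_subinterval[OF that(1-3)] that(4)]) auto
  ultimately show ?thesis
    by blast
qed

end
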